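(* Let $\ell,d$ be positive integers and $p=p_1\cdots p_\ell\in\mathbb{Z}_d^\ell$. The descending dipaths of the cyclic permutation routing $R(p_1\cdots p_\ell)$ in $\mathcal{B}(\ell,d)$ are pairwise arc-disjoint: no arc of $\mathcal{B}(\ell,d)$ is contained in two of them.
   Context: The BCube $\mathcal{B}(\ell,d)$ ($\ell,d$ positive integers) is the symmetric digraph defined as follows, with $\mathbb{Z}_d=\{0,1,\dots,d-1\}$. - Hosts: all vectors $\mathbf{h}=h_1\cdots h_\ell\in\mathbb{Z}_d^{\ell}$. - Switches: for each layer $k\in\{1,\dots,\ell\}$, one switch $\mathbf{s}^k$ for each vector $s^k_1\cdots s^k_{\ell-1}\in\mathbb{Z}_d^{\ell-1}$. - Links: host $\mathbf{h}$ and layer-$k$ switch $\mathbf{s}^k$ are joined if and only if $s^k_1\cdots s^k_{\ell-1}=h_1\cdots h_{k-1}h_{k+1}\cdots h_\ell$. Each such link gives an uplink arc (host $\to$ switch) and a downlink arc (switch $\to$ host) at layer $k$. Descending dipath: let $\mathbf{h}^s\neq\mathbf{h}^d$ be hosts, and let $i_1>\dots>i_m$ be the coordinates in which they differ. Define $\mathbf{h}^0=\mathbf{h}^s$, and let $\mathbf{h}^j$ be $\mathbf{h}^{j-1}$ with its $i_j$-th coordinate replaced by $h^d_{i_j}$. The descending dipath goes, for each $j=1,\dots,m$, from $\mathbf{h}^{j-1}$ through the unique layer-$i_j$ switch adjacent to both $\mathbf{h}^{j-1}$ and $\mathbf{h}^j$, to $\mathbf{h}^j$. When $\mathbf{h}^s=\mathbf{h}^d$,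 the dipath is the trivial path with no arcs. For $p\in\mathbb{Z}_d^\ell$, the permutation $P(p)$ is the set of pairs $(\mathbf{h}^s,\mathbf{h}^d)$ with $\mathbf{h}^s\in\mathbb{Z}_d^\ell$ and $h^d_i=(h^s_i+p_i)\bmod d$ for all $i$. The cyclic permutation routing $R(p)$ is the set of descending dipaths $P_{\mathbf{h}^s,\mathbf{h}^d}$ for $(\mathbf{h}^s,\mathbf{h}^d)\in P(p)$. *)

theory Defs
  imports Main
begin

text \<open>Hosts of B(l,d): lists h of length l with entries < d; coordinate i (1-based)
  is h ! (i - 1).  A layer-k switch is a pair (k, s) with s a list of length l-1.\<close>

type_synonym host = "nat list"
type_synonym switch = "nat \<times> nat list"

definition hosts :: "nat \<Rightarrow> nat \<Rightarrow> host set" where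
  "hosts l d = {h. length h = l \<and> (\<forall>x\<in>set h. x < d)}"

definition switches :: "nat \<Rightarrow> nat \<Rightarrow> switch set" where
  "switches l d = {(k, s). k \<in> {1..l} \<and> length s = l - 1 \<and> (\<forall>x\<in>set s. x < d)}"

definition delcoord :: "nat \<Rightarrow> host \<Rightarrow> nat list" where
  "delcoord k h = take (k - 1) h @ drop k h"

definition linked :: "nat \<Rightarrow> nat \<Rightarrow> host \<Rightarrow> switch \<Rightarrow> bool" where
  "linked l d h sw \<longleftrightarrow> h \<in> hosts l d \<and> sw \<in> switches l d \<and> snd sw = delcoord (fst sw) h"

datatype arc = Up host switch | Down switch host

definition arcs :: "nat \<Rightarrow> nat \<Rightarrow> arc set" where
  "arcs l d = {Up h sw | h sw. linked l d h sw} \<union> {Down sw h | h sw. linked l d h sw}"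

definition diffcoords :: "host \<Rightarrow> host \<Rightarrow> nat list" where
  "diffcoords hs ht = rev (filter (\<lambda>i. hs ! (i - 1) \<noteq> ht ! (i - 1)) [1..<length hs + 1])"

fun walk :: "host \<Rightarrow> host \<Rightarrow> nat list \<Rightarrow> arc list" where
  "walk ht h [] = []"
| "walk ht h (i # is) =
     (let h' = h[i - 1 := ht ! (i - 1)]
      in Up h (i, delcoord i h) # Down (i, delcoord i h) h' # walk ht h' is)"

definition desc_path :: "host \<Rightarrow> host \<Rightarrow> arc list" where
  "desc_path hs ht = walk ht hs (diffcoords hs ht)"

definition cyc_dest :: "nat \<Rightarrow> nat list \<Rightarrow> host \<Rightarrow> host" where
  "cyc_dest d p hs = map2 (\<lambda>x q. (x + q) mod d) hs p"

end

theory Submission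
  imports Defs "HOL-Number_Theory.Cong"
begin

text \<open>Under the cyclic permutation P(p) every source h differs from its destination exactly
  in the coordinates where p is nonzero, so all descending dipaths of R(p) correct the same
  coordinates in the same order.  An arc at layer i therefore occurs at the same step of any
  dipath containing it, and its host endpoint is the source with a fixed set of coordinates
  shifted by p modulo d.  Since this shift is injective on hosts, the arc determines the
  source.\<close>

definition correct_coords :: "host \<Rightarrow> host \<Rightarrow> nat list \<Rightarrow> host" where
  "correct_coords t h js = fold (\<lambda>i h. h[i - 1 := t ! (i - 1)]) js h"

lemma correct_coords_Cons:
  "correct_coords t h (i # js) = correct_coords t (h[i - 1 := t ! (i - 1)]) js"
  by (simp add: correct_coords_def)

lemma nth_correct_coords:
  assumes "m < length h"
  shows "correct_coords t h js ! m = (if m \<in> (\<lambda>i. i - 1) ` set js then t ! m else h ! m)"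
  using assms
  by (induction js arbitrary: h) (auto simp: correct_coords_def nth_list_update)

lemma in_set_walkD:
  assumes "a \<in> set (walk t h cs)"
  shows "\<exists>k<length cs. let h\<^sub>k = correct_coords t h (take k cs) in
           a = Up h\<^sub>k (cs ! k, delcoord (cs ! k) h\<^sub>k)
         \<or> a = Down (cs ! k, delcoord (cs ! k) h\<^sub>k) (correct_coords t h (take (Suc k) cs))"
  using assms
proof (induction cs arbitrary: h)
  case Nil
  then show ?case by simp
next
  case (Cons i cs)
  let ?h' = "h[i - 1 := t ! (i - 1)]"
  from Cons.prems consider
      "a = Up h (i, delcoord i h)" | "a = Down (i, delcoord i h) ?h'" | "a \<in> set (walk t ?h' cs)"
    by (auto simp: Let_def)
  then show ?case
  proof cases
    case 3
    then obtain k where "k < length cs" and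
      "let h\<^sub>k = correct_coords t ?h' (take k cs) in
           a = Up h\<^sub>k (cs ! k, delcoord (cs ! k) h\<^sub>k)
         \<or> a = Down (cs ! k, delcoord (cs ! k) h\<^sub>k) (correct_coords t ?h' (take (Suc k) cs))"
      using Cons.IH by blast
    then show ?thesis
      by (intro exI[of _ "Suc k"]) (simp add: correct_coords_Cons)
  qed (intro exI[of _ 0]; simp add: correct_coords_def)+
qed

text \<open>The layer of the switch fixes the step at which a shared arc is traversed.\<close>

lemma common_arc_of_walks:
  assumes "distinct cs" and "a \<in> set (walk t\<^sub>1 h\<^sub>1 cs)" and "a \<in> set (walk t\<^sub>2 h\<^sub>2 cs)"
  shows "\<exists>js. correct_coords t\<^sub>1 h\<^sub>1 js = correct_coords t\<^sub>2 h\<^sub>2 js"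
proof -
  obtain k where k: "k < length cs" and
    a1: "let h\<^sub>k = correct_coords t\<^sub>1 h\<^sub>1 (take k cs) in
           a = Up h\<^sub>k (cs ! k, delcoord (cs ! k) h\<^sub>k)
         \<or> a = Down (cs ! k, delcoord (cs ! k) h\<^sub>k) (correct_coords t\<^sub>1 h\<^sub>1 (take (Suc k) cs))"
    using in_set_walkD[OF assms(2)] by blast
  obtain k' where k': "k' < length cs" and
    a2: "let h\<^sub>k = correct_coords t\<^sub>2 h\<^sub>2 (take k' cs) in
           a = Up h\<^sub>k (cs ! k', delcoord (cs ! k') h\<^sub>k)
         \<or> a = Down (cs ! k', delcoord (cs ! k') h\<^sub>k) (correct_coords t\<^sub>2 h\<^sub>2 (take (Suc k') cs))"
    using in_set_walkD[OF assms(3)] by blast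
  have "cs ! k = cs ! k'"
    using a1 a2 by (auto simp: Let_def)
  then have "k = k'"
    using assms(1) k k' nth_eq_iff_index_eq by blast
  then show ?thesis
    using a1 a2 by (auto simp: Let_def)
qed

lemma add_mod_right_cancel:
  fixes a b c d :: nat
  assumes "a < d" and "b < d"
  shows "(a + c) mod d = (b + c) mod d \<longleftrightarrow> a = b"
  using cong_add_rcancel_nat[of a c b d] assms by (simp add: cong_def)

lemma nth_cyc_dest:
  "m < length h \<Longrightarrow> m < length p \<Longrightarrow> cyc_dest d p h ! m = (h ! m + p ! m) mod d"
  by (simp add: cyc_dest_def)

lemma diffcoords_cyc_dest:
  assumes "h \<in> hosts l d" and "p \<in> hosts l d"
  shows "diffcoords h (cyc_dest d p h) = rev (filter (\<lambda>i. p ! (i - 1) \<noteq> 0) [1..<l + 1])"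
proof -
  have "h ! (i - 1) \<noteq> cyc_dest d p h ! (i - 1) \<longleftrightarrow> p ! (i - 1) \<noteq> 0"
    if "i \<in> set [1..<l + 1]" for i
  proof -
    have m: "i - 1 < l"
      using that by auto
    have "h ! (i - 1) < d" and "p ! (i - 1) < d"
      using assms m by (auto simp: hosts_def)
    then have "(h ! (i - 1) + p ! (i - 1)) mod d = h ! (i - 1) \<longleftrightarrow> p ! (i - 1) = 0"
      using add_mod_right_cancel[of "p ! (i - 1)" d 0 "h ! (i - 1)"] by (simp add: add.commute)
    then show ?thesis
      using assms m by (auto simp: hosts_def nth_cyc_dest)
  qed
  then have "filter (\<lambda>i. h ! (i - 1) \<noteq> cyc_dest d p h ! (i - 1)) [1..<l + 1]
      = filter (\<lambda>i. p ! (i - 1) \<noteq> 0) [1..<l + 1]"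
    by (rule filter_cong[OF refl])
  moreover have "length h = l"
    using assms(1) by (simp add: hosts_def)
  ultimately show ?thesis
    unfolding diffcoords_def by simp
qed

lemma correct_coords_cyc_dest_inj:
  assumes "h\<^sub>1 \<in> hosts l d" and "h\<^sub>2 \<in> hosts l d" and "p \<in> hosts l d"
    and "correct_coords (cyc_dest d p h\<^sub>1) h\<^sub>1 js = correct_coords (cyc_dest d p h\<^sub>2) h\<^sub>2 js"
  shows "h\<^sub>1 = h\<^sub>2"
proof (rule nth_equalityI)
  show "length h\<^sub>1 = length h\<^sub>2"
    using assms by (simp add: hosts_def)
  fix m
  assume "m < length h\<^sub>1"
  then have m: "m < l" and lt: "h\<^sub>1 ! m < d" "h\<^sub>2 ! m < d" and lens: "length h\<^sub>2 = l" "length p = l"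
    using assms(1-3) by (auto simp: hosts_def)
  have "correct_coords (cyc_dest d p h\<^sub>1) h\<^sub>1 js ! m = correct_coords (cyc_dest d p h\<^sub>2) h\<^sub>2 js ! m"
    using assms(4) by simp
  then show "h\<^sub>1 ! m = h\<^sub>2 ! m"
    using m lt lens \<open>m < length h\<^sub>1\<close>
    by (auto simp: nth_correct_coords nth_cyc_dest add_mod_right_cancel split: if_splits)
qed

theorem lemma3:
  fixes l d :: nat and p :: "nat list"
  assumes "l > 0" and "d > 0" and "p \<in> hosts l d"
  shows "\<forall>h1\<in>hosts l d. \<forall>h2\<in>hosts l d. \<forall>a\<in>arcs l d.
           h1 \<noteq> h2 \<longrightarrow> a \<in> set (desc_path h1 (cyc_dest d p h1))
             \<longrightarrow> a \<notin> set (desc_path h2 (cyc_dest d p h2))"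
proof (intro ballI impI notI)
  fix h1 h2 a
  assume h1: "h1 \<in> hosts l d" and h2: "h2 \<in> hosts l d" and "h1 \<noteq> h2"
    and "a \<in> set (desc_path h1 (cyc_dest d p h1))"
    and "a \<in> set (desc_path h2 (cyc_dest d p h2))"
  moreover have "diffcoords h1 (cyc_dest d p h1) = diffcoords h2 (cyc_dest d p h2)"
    using diffcoords_cyc_dest[OF h1 assms(3)] diffcoords_cyc_dest[OF h2 assms(3)] by simp
  moreover have "distinct (diffcoords h1 (cyc_dest d p h1))"
    by (simp add: diffcoords_def)
  ultimately obtain js where
    "correct_coords (cyc_dest d p h1) h1 js = correct_coords (cyc_dest d p h2) h2 js"
    using common_arc_of_walks unfolding desc_path_def by metis
  then show False
    using correct_coords_cyc_dest_inj[OF h1 h2 assms(3)] \<open>h1 \<noteq> h2\<close> by blast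
qed

end
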